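(* Consider the two-sided GTRS $$\min_{\bm x \in \mathbb{R}^n} \left\{ \bm x^{\top} \bm Q_0 \bm x + \bm q_0^{\top} \bm x + b : b_1^l\le \bm x^{\top} \bm Q_1 \bm x + \bm q_1^{\top} \bm x \le b_1^u \right\},$$ written in matrix form as $\min_{\bm X\in\mathcal{X}}\{\langle \bm A_0,\bm X\rangle : b_1^l\le\langle \bm A_1,\bm X\rangle\le b_1^u,\ X_{11}=1\}$ with $\mathcal{X}:=\{\bm X\in \mathbb{S}_+^{n+1}: \operatorname{rank}(\bm X)\le 1\}$, $\bm A_0 = \begin{pmatrix} b & \bm q_0^{\top}/2\\ \bm q_0/2 & \bm Q_0\end{pmatrix}$, $\bm A_1 = \begin{pmatrix} 0 & \bm q_1^{\top}/2\\ \bm q_1/2 & \bm Q_1\end{pmatrix}$. Let $$\mathcal{C}:=\left\{\bm X\in \mathbb{S}_+^{n+1}: \operatorname{rank}(\bm X)\le 1,\ X_{11}=1,\ b_1^l \le \langle\bm A_1, \bm X\rangle \le b_1^u \right\},\quad \mathcal{C}_{\mathrm{rel}}:=\left\{\bm X\in \mathbb{S}_+^{n+1}: X_{11}=1,\ b_1^l \le \langle\bm A_1, \bm X\rangle \le b_1^u \right\}$$ be the feasible sets of the problem and of its Dantzig-Wolfe relaxation. Then (i) extreme point exactness holds: every extreme point of $\mathcal{C}_{\mathrm{rel}}$ belongs to $\mathcal{C}$; (ii) if $\bm Q_1 \neq \bm 0$ and $-\infty < b_1^l \le b_1^u < +\infty$, convex hull exactness holds: $\mathcal{C}_{\mathrm{rel}}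 = \operatorname{cl}\operatorname{conv}(\mathcal{C})$.
   Context: $\bm Q_0,\bm Q_1$ are symmetric (possibly indefinite) matrices, $-\infty\le b_1^l\le b_1^u\le+\infty$, and the Dantzig-Wolfe relaxation replaces $\mathcal{X}$ by its closed convex hull $\mathbb{S}_+^{n+1}$. $\operatorname{cl}\operatorname{conv}$ denotes the closed convex hull. *)

theory Defs
  imports "HOL-Analysis.Analysis" "HOL-Library.Extended_Real"
begin

text \<open>Matrices in S^(n+1) are indexed by the type 'n option; the index None plays the
role of the first (homogenizing) coordinate, Some i the coordinates of x in R^n, n = CARD('n).\<close>

definition psd :: "real^'m^'m \<Rightarrow> bool" where
  "psd X \<longleftrightarrow> transpose X = X \<and> (\<forall>v. 0 \<le> v \<bullet> (X *v v))"

definition frob :: "real^'m^'m \<Rightarrow> real^'m^'m \<Rightarrow> real" where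
  "frob A X = (\<Sum>i\<in>UNIV. \<Sum>j\<in>UNIV. A $ i $ j * X $ i $ j)"

definition homog_mat :: "real \<Rightarrow> real^'n \<Rightarrow> real^'n^'n \<Rightarrow> real^('n option)^('n option)" where
  "homog_mat c q Q = (\<chi> i j. case (i, j) of
      (None, None) \<Rightarrow> c
    | (None, Some j') \<Rightarrow> q $ j' / 2
    | (Some i', None) \<Rightarrow> q $ i' / 2
    | (Some i', Some j') \<Rightarrow> Q $ i' $ j')"

definition C_set :: "real^'n \<Rightarrow> real^'n^'n \<Rightarrow> ereal \<Rightarrow> ereal \<Rightarrow> (real^('n option)^('n option)) set" where
  "C_set q1 Q1 bl bu = {X. psd X \<and> rank X \<le> 1 \<and> X $ None $ None = 1 \<and>
      bl \<le> ereal (frob (homog_mat 0 q1 Q1) X) \<and> ereal (frob (homog_mat 0 q1 Q1) X) \<le> bu}"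

definition C_rel :: "real^'n \<Rightarrow> real^'n^'n \<Rightarrow> ereal \<Rightarrow> ereal \<Rightarrow> (real^('n option)^('n option)) set" where
  "C_rel q1 Q1 bl bu = {X. psd X \<and> X $ None $ None = 1 \<and>
      bl \<le> ereal (frob (homog_mat 0 q1 Q1) X) \<and> ereal (frob (homog_mat 0 q1 Q1) X) \<le> bu}"

end

theory Submission
  imports Defs "HOL-Library.Quadratic_Discriminant"
begin

text \<open>
  (i) Let X be feasible with rank X > 1. Two Cholesky steps, first at the pivot X_11 = 1, write
  X = R + u u^T + w w^T with R psd, u_1 = 1 and w_1 = 0, w not zero. Every matrix
  D = b (u w^T + w u^T) + c w w^T has D_11 = 0, and (b, c) can be chosen nonzero with
  <A_1, D> = 0; since X +- t D = R + (u u^T + w w^T +- t D) is psd for small t, X is the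
  midpoint of two distinct feasible points and hence not extreme.

  (ii) Let X be feasible and c = <A_1, X>. Rotating pairs of rank-one terms (Sturm and Zhang)
  gives X = sum_i v_i v_i^T with <A_1 - c E_11, v_i v_i^T> = 0 for every i. A term with
  (v_i)_1 ~= 0 is (v_i)_1^2 times the lift [1; x][1; x]^T of a point x of the level set
  {g = c}, g(x) = x^T Q_1 x + q_1^T x, and these weights sum to X_11 = 1. A term with
  (v_i)_1 = 0 is [0; d][0; d]^T with d^T Q_1 d = 0; when Q_1 ~= 0, d or -d is an asymptotic
  direction of {g = c}, which makes [0; d][0; d]^T a recession direction of the closed convex
  hull of the lifted level set. That hull lies in cl conv C for any bounds with
  b_1^l <= c <= b_1^u.
\<close>

section \<open>Rank-one matrices and positive semidefiniteness\<close>

definition outer_prod :: "real^'m \<Rightarrow> real^'m \<Rightarrow> real^'m^'m" where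
  "outer_prod u w = (\<chi> i j. u $ i * w $ j)"

abbreviation outer :: "real^'m \<Rightarrow> real^'m^'m" where
  "outer u \<equiv> outer_prod u u"

lemma outer_prod_nth [simp]: "outer_prod u w $ i $ j = u $ i * w $ j"
  by (simp add: outer_prod_def)

lemma outer_prod_mult_vec: "outer_prod u w *v z = (w \<bullet> z) *\<^sub>R u"
  by (simp add: matrix_vector_mult_def vec_eq_iff inner_vec_def sum_distrib_left mult_ac)

lemma quad_form_outer_prod: "z \<bullet> (outer_prod u w *v z) = (u \<bullet> z) * (w \<bullet> z)"
  by (simp add: outer_prod_mult_vec inner_commute)

lemma outer_scaleR: "outer (c *\<^sub>R u) = c\<^sup>2 *\<^sub>R outer u"
  by (simp add: vec_eq_iff power2_eq_square mult_ac)

lemma rank_outer_le_1: "rank (outer u) \<le> 1"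
proof -
  have "range (\<lambda>z. outer u *v z) \<subseteq> span {u}"
    by (auto simp: outer_prod_mult_vec span_singleton)
  then have "rank (outer u) \<le> dim {u}"
    unfolding rank_dim_range by (metis dim_span dim_subset)
  then show ?thesis
    by (simp split: if_splits)
qed

lemma tendsto_outer:
  fixes f :: "'a \<Rightarrow> real^'m"
  assumes "(f \<longlongrightarrow> a) F"
  shows "((\<lambda>k. outer (f k)) \<longlongrightarrow> outer a) F"
  by (intro vec_tendstoI) (simp add: outer_prod_def tendsto_intros assms)

lemma frob_add: "frob A (X + Y) = frob A X + frob A Y"
  by (simp add: frob_def distrib_left sum.distrib)

lemma frob_scaleR: "frob A (c *\<^sub>R X) = c * frob A X"
  by (simp add: frob_def sum_distrib_left mult_ac)

lemma frob_diff: "frob A (X - Y) = frob A X - frob A Y"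
  by (simp add: frob_def right_diff_distrib sum_subtractf)

lemma linear_frob: "linear (frob A)"
  by (rule linearI) (simp_all add: frob_add frob_scaleR)

lemma frob_sum_list: "frob A (sum_list (map f xs)) = sum_list (map (\<lambda>v. frob A (f v)) xs)"
  by (induction xs) (simp_all add: frob_add linear_0[OF linear_frob])

lemma frob_diff_left: "frob (A - B) X = frob A X - frob B X"
  by (simp add: frob_def left_diff_distrib sum_subtractf)

lemma frob_scaleR_left: "frob (c *\<^sub>R A) X = c * frob A X"
  by (simp add: frob_def sum_distrib_left mult_ac)


lemma quad_form_add: "z \<bullet> ((X + Y) *v z) = z \<bullet> (X *v z) + z \<bullet> (Y *v z)"
  by (simp add: matrix_vector_mult_add_rdistrib inner_add_right)

lemma quad_form_diff: "z \<bullet> ((X - Y) *v z) = z \<bullet> (X *v z) - z \<bullet> (Y *v z)"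
  for X :: "real^'m^'m"
  by (simp add: matrix_vector_mult_diff_rdistrib inner_diff_right)

lemma quad_form_scaleR: "z \<bullet> ((c *\<^sub>R X) *v z) = c * (z \<bullet> (X *v z))"
  for X :: "real^'m^'m"
  by (simp flip: scaleR_matrix_vector_assoc)

lemma symmetric_bilinear_commute:
  fixes X :: "real^'m^'m"
  assumes "transpose X = X"
  shows "x \<bullet> (X *v z) = z \<bullet> (X *v x)"
proof -
  have "x \<bullet> (X *v z) = (transpose X *v x) \<bullet> z"
    by (simp add: dot_lmul_matrix)
  then show ?thesis
    by (simp add: assms inner_commute)
qed

lemma symmetric_iff_nth: "transpose M = M \<longleftrightarrow> (\<forall>i j. M $ i $ j = M $ j $ i)"
  by (auto simp: transpose_def vec_eq_iff)

lemma nth_eq_bilinear_axis: "X $ i $ j = axis i 1 \<bullet> (X *v axis j 1)"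
  for X :: "real^'m^'m"
  by (simp add: matrix_vector_mult_basis column_def inner_commute[of "axis i 1"] inner_axis)

lemma quad_form_eq_0_imp_eq_0:
  fixes X :: "real^'m^'m"
  assumes "transpose X = X" and "\<And>z. z \<bullet> (X *v z) = 0"
  shows "X = 0"
proof -
  have "x \<bullet> (X *v z) = 0" for x z
    using assms(2)[of "x + z"] assms(2)[of x] assms(2)[of z] symmetric_bilinear_commute[OF assms(1), of z x]
    by (simp add: matrix_vector_right_distrib inner_add_left inner_add_right)
  then have "X $ i $ j = 0" for i j
    by (simp add: nth_eq_bilinear_axis[of X i j])
  then show ?thesis
    by (simp add: vec_eq_iff)
qed

lemma quadratic_nonneg_imp_discrim_le:
  fixes a b c :: real
  assumes nonneg: "\<And>t. 0 \<le> a + 2 * b * t + c * t\<^sup>2"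
  shows "b\<^sup>2 \<le> a * c"
proof (cases "c = 0")
  case True
  show ?thesis
  proof (rule ccontr)
    assume "\<not> ?thesis"
    then have "b \<noteq> 0"
      using True by auto
    have "0 \<le> a + 2 * b * (- (a + 1) / (2 * b)) + c * (- (a + 1) / (2 * b))\<^sup>2"
      by (rule nonneg)
    also have "\<dots> = -1"
      using True \<open>b \<noteq> 0\<close> by (simp add: field_simps)
    finally show False
      by simp
  qed
next
  case False
  have "0 < c"
  proof (rule ccontr)
    assume "\<not> 0 < c"
    then have "c < 0"
      using False by simp
    define t where "t = sqrt ((\<bar>a\<bar> + 1) / - c)"
    have "t\<^sup>2 = (\<bar>a\<bar> + 1) / - c"
      unfolding t_def using \<open>c < 0\<close> by (intro real_sqrt_pow2 divide_nonneg_pos) auto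
    then have "c * t\<^sup>2 = - (\<bar>a\<bar> + 1)"
      using \<open>c < 0\<close> by simp
    moreover have "0 \<le> a + 2 * b * t + c * t\<^sup>2" "0 \<le> a + 2 * b * (- t) + c * (- t)\<^sup>2"
      by (rule nonneg)+
    ultimately show False
      by (simp add: power2_eq_square)
  qed
  have "0 \<le> a + 2 * b * (- b / c) + c * (- b / c)\<^sup>2"
    by (rule nonneg)
  also have "\<dots> = a - b\<^sup>2 / c"
    using False by (simp add: field_simps power2_eq_square)
  finally show ?thesis
    using \<open>0 < c\<close> by (simp add: field_simps)
qed

lemma psd_cauchy_schwarz:
  fixes X :: "real^'m^'m"
  assumes "psd X"
  shows "(x \<bullet> (X *v z))\<^sup>2 \<le> (x \<bullet> (X *v x)) * (z \<bullet> (X *v z))"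
proof (rule quadratic_nonneg_imp_discrim_le)
  fix t
  have "0 \<le> (x + t *\<^sub>R z) \<bullet> (X *v (x + t *\<^sub>R z))"
    using assms by (simp add: psd_def)
  also have "\<dots> = x \<bullet> (X *v x) + 2 * (x \<bullet> (X *v z)) * t + (z \<bullet> (X *v z)) * t\<^sup>2"
    using symmetric_bilinear_commute[of X z x] assms
    by (simp add: psd_def algebra_simps inner_add_left inner_add_right power2_eq_square)
  finally show "0 \<le> x \<bullet> (X *v x) + 2 * (x \<bullet> (X *v z)) * t + (z \<bullet> (X *v z)) * t\<^sup>2" .
qed

lemma psd_nth_sq_le:
  fixes X :: "real^'m^'m"
  assumes "psd X"
  shows "(X $ i $ j)\<^sup>2 \<le> X $ i $ i * X $ j $ j"
  using psd_cauchy_schwarz[OF assms, of "axis i 1" "axis j 1"]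
  by (simp flip: nth_eq_bilinear_axis)

lemma psd_diag_nonneg: "psd X \<Longrightarrow> 0 \<le> X $ i $ i"
  for X :: "real^'m^'m"
  by (simp add: psd_def nth_eq_bilinear_axis)

lemma psd_diag_eq_0_imp_eq_0:
  fixes X :: "real^'m^'m"
  assumes "psd X" and "\<And>i. X $ i $ i = 0"
  shows "X = 0"
proof -
  have "(X $ i $ j)\<^sup>2 \<le> 0" for i j
    using psd_nth_sq_le[OF assms(1), of i j] assms(2) by simp
  then show ?thesis
    by (simp add: vec_eq_iff)
qed

lemma psd_outer: "psd (outer u)"
  by (simp add: psd_def symmetric_iff_nth mult.commute quad_form_outer_prod)

lemma psd_add: "psd X \<Longrightarrow> psd Y \<Longrightarrow> psd (X + Y)"
  for X :: "real^'m^'m"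
  by (simp add: psd_def symmetric_iff_nth quad_form_add)

lemma psd_scaleR: "psd X \<Longrightarrow> 0 \<le> c \<Longrightarrow> psd (c *\<^sub>R X)"
  for X :: "real^'m^'m"
  by (simp add: psd_def symmetric_iff_nth quad_form_scaleR)

lemma convex_psd: "convex {X :: real^'m^'m. psd X}"
  by (rule convexI) (simp add: psd_add psd_scaleR)

lemma closed_psd: "closed {X :: real^'m^'m. psd X}"
proof -
  have "continuous_on UNIV (\<lambda>X :: real^'m^'m. v \<bullet> (X *v v))" for v
    by (intro linear_continuous_on bounded_linearI') (simp_all add: quad_form_add quad_form_scaleR)
  then have "closed {X :: real^'m^'m. 0 \<le> v \<bullet> (X *v v)}" for v
    by (intro closed_Collect_le continuous_on_const)
  moreover have "closed {X :: real^'m^'m. X $ i $ j = X $ j $ i}" for i j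
    by (intro closed_Collect_eq continuous_intros)
  ultimately have "closed {X :: real^'m^'m. (\<forall>i j. X $ i $ j = X $ j $ i) \<and> (\<forall>v. 0 \<le> v \<bullet> (X *v v))}"
    by (intro closed_Collect_conj closed_Collect_all)
  then show ?thesis
    by (simp add: psd_def symmetric_iff_nth)
qed

lemma psd_cholesky_step:
  fixes X :: "real^'m^'m" and k :: 'm
  defines "u \<equiv> (1 / sqrt (X $ k $ k)) *\<^sub>R (X *v axis k 1)"
  assumes X: "psd X" and pivot: "0 < X $ k $ k"
  shows "psd (X - outer u)" and "(X - outer u) $ i $ k = 0" and "u $ k = sqrt (X $ k $ k)"
proof -
  let ?p = "X $ k $ k"
  have symX: "transpose X = X"
    using X by (simp add: psd_def)
  have u_nth: "u $ i = X $ i $ k / sqrt ?p" for i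
    by (simp add: u_def matrix_vector_mult_basis column_def)
  show u_k: "u $ k = sqrt ?p"
    using pivot by (simp add: u_nth real_div_sqrt)
  show "(X - outer u) $ i $ k = 0"
    using pivot by (simp add: u_nth[of i] u_k)
  have "0 \<le> z \<bullet> ((X - outer u) *v z)" for z
  proof -
    have "u \<bullet> z = (axis k 1 \<bullet> (X *v z)) / sqrt ?p"
      using symmetric_bilinear_commute[OF symX, of z "axis k 1"]
      by (simp add: u_def inner_commute[of "X *v axis k 1" z])
    moreover have "(axis k 1 \<bullet> (X *v z))\<^sup>2 \<le> ?p * (z \<bullet> (X *v z))"
      using psd_cauchy_schwarz[OF X, of "axis k 1" z] by (simp flip: nth_eq_bilinear_axis)
    ultimately have "?p * (u \<bullet> z)\<^sup>2 \<le> ?p * (z \<bullet> (X *v z))"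
      using pivot by (simp add: power_divide)
    then have "(u \<bullet> z)\<^sup>2 \<le> z \<bullet> (X *v z)"
      using pivot by simp
    then show ?thesis
      by (simp add: quad_form_diff quad_form_outer_prod power2_eq_square)
  qed
  moreover have "transpose (X - outer u) = X - outer u"
    using symX by (simp add: symmetric_iff_nth mult.commute)
  ultimately show "psd (X - outer u)"
    by (simp add: psd_def)
qed

lemma psd_eq_sum_list_outer:
  fixes X :: "real^'m^'m"
  assumes "psd X"
  shows "\<exists>ps. X = sum_list (map outer ps)"
  using assms
proof (induction "card {i. X $ i $ i \<noteq> 0}" arbitrary: X rule: less_induct)
  case less
  show ?case
  proof (cases "\<forall>i. X $ i $ i = 0")
    case True
    then show ?thesis
      using psd_diag_eq_0_imp_eq_0[OF less.prems] by (intro exI[of _ "[]"]) simp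
  next
    case False
    then obtain k where "X $ k $ k \<noteq> 0"
      by blast
    then have pivot: "0 < X $ k $ k"
      using psd_diag_nonneg[OF less.prems, of k] by simp
    define u where "u = (1 / sqrt (X $ k $ k)) *\<^sub>R (X *v axis k 1)"
    note chol = psd_cholesky_step[OF less.prems pivot, folded u_def]
    have "(X - outer u) $ i $ i = 0" if "X $ i $ i = 0" for i
      using psd_diag_nonneg[OF chol(1), of i] zero_le_square[of "u $ i"] that by simp
    then have "{i. (X - outer u) $ i $ i \<noteq> 0} \<subseteq> {i. X $ i $ i \<noteq> 0}"
      by blast
    moreover have "k \<notin> {i. (X - outer u) $ i $ i \<noteq> 0}"
      using chol(2)[of k] by (simp only: mem_Collect_eq not_not)
    moreover have "k \<in> {i. X $ i $ i \<noteq> 0}"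
      using pivot by simp
    ultimately have "{i. (X - outer u) $ i $ i \<noteq> 0} \<subset> {i. X $ i $ i \<noteq> 0}"
      by blast
    then have "card {i. (X - outer u) $ i $ i \<noteq> 0} < card {i. X $ i $ i \<noteq> 0}"
      by (simp add: psubset_card_mono)
    then obtain ps where "X - outer u = sum_list (map outer ps)"
      using less.hyps[OF _ chol(1)] by blast
    then have "X = sum_list (map outer (u # ps))"
      by (simp add: diff_eq_eq add.commute)
    then show ?thesis ..
  qed
qed

section \<open>Extreme points of the relaxation\<close>

lemma small_multiple_binary_quadratic_bound:
  fixes b c :: real
  obtains t where "0 < t" and "\<And>x y. \<bar>t * (2 * b * x * y + c * y\<^sup>2)\<bar> \<le> x\<^sup>2 + y\<^sup>2"
proof
  define t where "t = 1 / (\<bar>b\<bar> + \<bar>c\<bar> + 1)"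
  show "0 < t"
    by (simp add: t_def add_nonneg_pos)
  fix x y :: real
  have "2 * \<bar>x\<bar> * \<bar>y\<bar> \<le> x\<^sup>2 + y\<^sup>2"
    using sum_squares_bound[of "\<bar>x\<bar>" "\<bar>y\<bar>"] by simp
  then have "\<bar>b\<bar> * (2 * \<bar>x\<bar> * \<bar>y\<bar>) \<le> \<bar>b\<bar> * (x\<^sup>2 + y\<^sup>2)"
    by (simp add: mult_left_mono)
  then have "\<bar>2 * b * x * y\<bar> \<le> \<bar>b\<bar> * (x\<^sup>2 + y\<^sup>2)"
    by (simp add: abs_mult mult_ac)
  moreover have "\<bar>c * y\<^sup>2\<bar> \<le> \<bar>c\<bar> * (x\<^sup>2 + y\<^sup>2)"
    by (simp add: abs_mult mult_left_mono)
  moreover have "(\<bar>b\<bar> + \<bar>c\<bar> + 1) * (x\<^sup>2 + y\<^sup>2) = \<bar>b\<bar> * (x\<^sup>2 + y\<^sup>2) + \<bar>c\<bar> * (x\<^sup>2 + y\<^sup>2) + (x\<^sup>2 + y\<^sup>2)"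
    by algebra
  moreover have "0 \<le> x\<^sup>2 + y\<^sup>2"
    by simp
  ultimately have "\<bar>2 * b * x * y + c * y\<^sup>2\<bar> \<le> (\<bar>b\<bar> + \<bar>c\<bar> + 1) * (x\<^sup>2 + y\<^sup>2)"
    using abs_triangle_ineq[of "2 * b * x * y" "c * y\<^sup>2"] by linarith
  then show "\<bar>t * (2 * b * x * y + c * y\<^sup>2)\<bar> \<le> x\<^sup>2 + y\<^sup>2"
    by (simp add: t_def abs_mult field_simps add_nonneg_pos)
qed

lemma psd_outer_perturbation:
  fixes X :: "real^'m^'m" and u w :: "real^'m" and b c :: real
  defines "D \<equiv> b *\<^sub>R (outer_prod u w + outer_prod w u) + c *\<^sub>R outer w"
  assumes "psd (X - outer u - outer w)"
  obtains t where "0 < t" and "psd (X + t *\<^sub>R D)" and "psd (X - t *\<^sub>R D)"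
proof -
  obtain t where t: "0 < t" "\<And>x y. \<bar>t * (2 * b * x * y + c * y\<^sup>2)\<bar> \<le> x\<^sup>2 + y\<^sup>2"
    using small_multiple_binary_quadratic_bound by blast
  have "psd (outer u + outer w + s *\<^sub>R D)" if "\<bar>s\<bar> = t" for s
    unfolding psd_def
  proof
    show "transpose (outer u + outer w + s *\<^sub>R D) = outer u + outer w + s *\<^sub>R D"
      by (simp add: D_def symmetric_iff_nth algebra_simps)
    show "\<forall>z. 0 \<le> z \<bullet> ((outer u + outer w + s *\<^sub>R D) *v z)"
    proof
      fix z
      let ?E = "2 * b * (u \<bullet> z) * (w \<bullet> z) + c * (w \<bullet> z)\<^sup>2"
      have "\<bar>s * ?E\<bar> \<le> (u \<bullet> z)\<^sup>2 + (w \<bullet> z)\<^sup>2"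
        using t(2) that by (simp add: abs_mult)
      moreover have "z \<bullet> ((outer u + outer w + s *\<^sub>R D) *v z) = (u \<bullet> z)\<^sup>2 + (w \<bullet> z)\<^sup>2 + s * ?E"
        by (simp add: D_def quad_form_add quad_form_scaleR quad_form_outer_prod power2_eq_square
            algebra_simps)
      ultimately show "0 \<le> z \<bullet> ((outer u + outer w + s *\<^sub>R D) *v z)"
        by linarith
    qed
  qed
  then have "psd (X - outer u - outer w + (outer u + outer w + s *\<^sub>R D))" if "\<bar>s\<bar> = t" for s
    using assms(2) that by (blast intro: psd_add[of "X - outer u - outer w"])
  from this[of t] this[of "- t"] show ?thesis
    using that t(1) by (simp add: algebra_simps)
qed

lemma psd_rank_gt_1_split_two_outer:
  fixes X :: "real^'m^'m"
  assumes X: "psd X" and pivot: "0 < X $ k $ k" and rank: "\<not> rank X \<le> 1"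
  obtains u w j where "psd (X - outer u - outer w)" and "u $ k \<noteq> 0" and "w $ k = 0" and "w $ j \<noteq> 0"
proof -
  define u where "u = (1 / sqrt (X $ k $ k)) *\<^sub>R (X *v axis k 1)"
  note chol_u = psd_cholesky_step[OF X pivot, folded u_def]
  have "X - outer u \<noteq> 0"
    using rank rank_outer_le_1[of u] by auto
  then obtain j where "(X - outer u) $ j $ j \<noteq> 0"
    using psd_diag_eq_0_imp_eq_0[OF chol_u(1)] by blast
  then have pivot_j: "0 < (X - outer u) $ j $ j"
    using psd_diag_nonneg[OF chol_u(1), of j] by simp
  define w where "w = (1 / sqrt ((X - outer u) $ j $ j)) *\<^sub>R ((X - outer u) *v axis j 1)"
  note chol_w = psd_cholesky_step[OF chol_u(1) pivot_j, folded w_def]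
  have "w $ k = (X - outer u) $ k $ j / sqrt ((X - outer u) $ j $ j)"
    by (simp add: w_def matrix_vector_mult_basis column_def)
  also have "(X - outer u) $ k $ j = (X - outer u) $ j $ k"
    using chol_u(1) by (simp add: psd_def symmetric_iff_nth)
  finally have "w $ k = 0"
    using chol_u(2) by simp
  moreover have "u $ k \<noteq> 0" and "w $ j \<noteq> 0"
    using chol_u(3) chol_w(3) pivot pivot_j by simp_all
  ultimately show ?thesis
    using that chol_w(1) by simp
qed

lemma psd_rank_gt_1_perturbation:
  fixes X :: "real^'m^'m" and \<phi> :: "real^'m^'m \<Rightarrow> real"
  assumes X: "psd X" and pivot: "0 < X $ k $ k" and rank: "\<not> rank X \<le> 1" and \<phi>: "linear \<phi>"
  obtains D where "D \<noteq> 0" and "D $ k $ k = 0" and "\<phi> D = 0" and "psd (X + D)" and "psd (X - D)"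
proof -
  obtain u w j where R: "psd (X - outer u - outer w)" and u_k: "u $ k \<noteq> 0" and w_k: "w $ k = 0"
    and w_j: "w $ j \<noteq> 0"
    using psd_rank_gt_1_split_two_outer[OF X pivot rank] by blast
  define M1 where "M1 = outer_prod u w + outer_prod w u"
  define M2 where "M2 = outer w"
  obtain b c where bc: "b * \<phi> M1 + c * \<phi> M2 = 0" and bc_ne: "b \<noteq> 0 \<or> c \<noteq> 0"
  proof (cases "\<phi> M1 = 0 \<and> \<phi> M2 = 0")
    case True
    then show ?thesis
      using that[of 1 0] by simp
  next
    case False
    then show ?thesis
      using that[of "\<phi> M2" "- \<phi> M1"] by (auto simp: mult.commute)
  qed
  define D where "D = b *\<^sub>R M1 + c *\<^sub>R M2"
  have "D \<noteq> 0"
  proof (cases "b = 0")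
    case False
    have "D $ k $ j = b * u $ k * w $ j"
      by (simp add: D_def M1_def M2_def w_k)
    then show ?thesis
      using False u_k w_j by auto
  next
    case True
    have "D $ j $ j = c * w $ j * w $ j"
      by (simp add: D_def M2_def True)
    then show ?thesis
      using True bc_ne w_j by auto
  qed
  moreover have "D $ k $ k = 0"
    by (simp add: D_def M1_def M2_def w_k)
  moreover have "\<phi> D = 0"
    using bc by (simp add: D_def linear_add[OF \<phi>] linear_scale[OF \<phi>])
  moreover obtain t where "0 < t" "psd (X + t *\<^sub>R D)" "psd (X - t *\<^sub>R D)"
    using psd_outer_perturbation[of X u w b c] R unfolding D_def M1_def M2_def by auto
  ultimately show ?thesis
    using that[of "t *\<^sub>R D"] by (simp add: linear_scale[OF \<phi>])
qed

lemma extreme_point_C_rel_rank_le_1: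
  assumes extreme: "X extreme_point_of C_rel q1 Q1 bl bu"
  shows "rank X \<le> 1"
proof (rule ccontr)
  assume rank: "\<not> rank X \<le> 1"
  have X: "X \<in> C_rel q1 Q1 bl bu"
    using extreme by (simp add: extreme_point_of_def)
  then have "psd X" and "0 < X $ None $ None"
    by (simp_all add: C_rel_def)
  then obtain D where D: "D \<noteq> 0" "D $ None $ None = 0" "frob (homog_mat 0 q1 Q1) D = 0"
    "psd (X + D)" "psd (X - D)"
    using psd_rank_gt_1_perturbation[OF \<open>psd X\<close> \<open>0 < X $ None $ None\<close> rank linear_frob] by blast
  then have "X + D \<in> C_rel q1 Q1 bl bu" "X - D \<in> C_rel q1 Q1 bl bu"
    using X by (simp_all add: C_rel_def frob_add frob_diff)
  moreover have "X \<in> open_segment (X + D) (X - D)"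
  proof -
    have "midpoint (X + D) (X - D) = X"
      by (simp add: midpoint_def scaleR_add_right flip: scaleR_2)
    moreover have "X + D \<noteq> X - D"
    proof
      assume "X + D = X - D"
      moreover have "(2::real) *\<^sub>R D = (X + D) - (X - D)"
        by (simp add: scaleR_2 algebra_simps)
      ultimately show False
        using D(1) by simp
    qed
    ultimately show ?thesis
      using midpoint_in_open_segment by metis
  qed
  ultimately show False
    using extreme by (auto simp: extreme_point_of_def)
qed

section \<open>Rank-one decompositions with vanishing quadratic form\<close>

lemma outer_add_scaleR:
  "outer (p + t *\<^sub>R q) = outer p + t *\<^sub>R (outer_prod p q + outer_prod q p) + t\<^sup>2 *\<^sub>R outer q"
  by (simp add: vec_eq_iff algebra_simps power2_eq_square)

lemma outer_rotation:
  fixes p q :: "real^'m" and t :: real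
  defines "k \<equiv> 1 / sqrt (1 + t\<^sup>2)"
  shows "outer (k *\<^sub>R (p + t *\<^sub>R q)) + outer (k *\<^sub>R (q - t *\<^sub>R p)) = outer p + outer q"
proof -
  have "0 < 1 + t\<^sup>2"
    by (intro add_pos_nonneg) simp_all
  then have "k\<^sup>2 * (1 + t\<^sup>2) = 1"
    by (simp add: k_def power_divide)
  moreover have "outer (k *\<^sub>R (p + t *\<^sub>R q)) + outer (k *\<^sub>R (q - t *\<^sub>R p))
      = (k\<^sup>2 * (1 + t\<^sup>2)) *\<^sub>R (outer p + outer q)"
    by (simp add: vec_eq_iff algebra_simps power2_eq_square)
  ultimately show ?thesis
    by simp
qed

lemma outer_pair_rotate_to_null:
  assumes "frob G (outer p) * frob G (outer q) < 0"
  obtains v w where "outer v + outer w = outer p + outer q" and "frob G (outer v) = 0"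
proof -
  let ?\<beta> = "frob G (outer_prod p q + outer_prod q p)"
  have "discrim (frob G (outer q)) ?\<beta> (frob G (outer p)) = ?\<beta>\<^sup>2 - 4 * (frob G (outer p) * frob G (outer q))"
    by (simp add: discrim_def mult_ac)
  then have "0 \<le> discrim (frob G (outer q)) ?\<beta> (frob G (outer p))"
    using assms zero_le_power2[of ?\<beta>] by linarith
  moreover have "frob G (outer q) \<noteq> 0"
    using assms by auto
  ultimately obtain t where t: "frob G (outer q) * t\<^sup>2 + ?\<beta> * t + frob G (outer p) = 0"
    using discriminant_nonneg_ex by blast
  define k where "k = 1 / sqrt (1 + t\<^sup>2)"
  have "frob G (outer (p + t *\<^sub>R q)) = 0"
    using t by (simp add: outer_add_scaleR frob_add frob_scaleR algebra_simps)
  then have "frob G (outer (k *\<^sub>R (p + t *\<^sub>R q))) = 0"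
    by (simp add: outer_scaleR frob_scaleR)
  with outer_rotation[of t p q] show ?thesis
    using that unfolding k_def by blast
qed

lemma sum_list_eq_0_opposite_sign:
  fixes f :: "'a \<Rightarrow> real"
  assumes "f p + (\<Sum>v\<leftarrow>xs. f v) = 0" and "f p \<noteq> 0"
  obtains q where "q \<in> set xs" and "f p * f q < 0"
proof (rule ccontr)
  assume "\<not> thesis"
  with that have "0 \<le> (\<Sum>v\<leftarrow>xs. f p * f v)"
    by (intro sum_list_nonneg) (auto simp: not_less[symmetric])
  also have "(\<Sum>v\<leftarrow>xs. f p * f v) = f p * (\<Sum>v\<leftarrow>xs. f v)"
    by (simp add: sum_list_const_mult)
  also have "(\<Sum>v\<leftarrow>xs. f v) = - f p"
    using assms(1) by linarith
  finally show False
    using assms(2) by (simp add: mult_le_0_iff) linarith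
qed

lemma sum_list_outer_frob_null_decomposition:
  fixes G :: "real^'m^'m"
  assumes "(\<Sum>v\<leftarrow>ps. frob G (outer v)) = 0"
  shows "\<exists>qs. sum_list (map outer qs) = sum_list (map outer ps) \<and> (\<forall>q\<in>set qs. frob G (outer q) = 0)"
  using assms
proof (induction "length ps" arbitrary: ps rule: less_induct)
  case less
  let ?\<phi> = "\<lambda>v. frob G (outer v)"
  show ?case
  proof (cases ps)
    case Nil
    then show ?thesis
      by (intro exI[of _ "[]"]) simp
  next
    case (Cons p rest)
    show ?thesis
    proof (cases "?\<phi> p = 0")
      case True
      then obtain qs where "sum_list (map outer qs) = sum_list (map outer rest)"
        "\<forall>q\<in>set qs. ?\<phi> q = 0"
        using less Cons by auto
      then show ?thesis
        using True Cons by (intro exI[of _ "p # qs"]) simp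
    next
      case False
      obtain q where "q \<in> set rest" and pq: "?\<phi> p * ?\<phi> q < 0"
        using sum_list_eq_0_opposite_sign[of ?\<phi> p rest] less.prems Cons False by auto
      then obtain r1 r2 where rest: "rest = r1 @ q # r2"
        by (meson split_list)
      obtain v w where vw: "outer v + outer w = outer p + outer q" and v: "?\<phi> v = 0"
        using outer_pair_rotate_to_null[OF pq] by blast
      have "?\<phi> w = ?\<phi> p + ?\<phi> q"
        using arg_cong[OF vw, of "frob G"] v by (simp add: frob_add)
      then have "(\<Sum>v\<leftarrow>w # r1 @ r2. ?\<phi> v) = 0"
        using less.prems Cons rest by simp
      then obtain qs where qs: "sum_list (map outer qs) = sum_list (map outer (w # r1 @ r2))"
        "\<forall>q\<in>set qs. ?\<phi> q = 0"
        using less.hyps[of "w # r1 @ r2"] Cons rest by auto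
      have "sum_list (map outer (v # qs)) = sum_list (map outer ps)"
        using qs(1) vw Cons rest by (simp add: algebra_simps)
      then show ?thesis
        using qs(2) v by (intro exI[of _ "v # qs"]) simp
    qed
  qed
qed

section \<open>Homogenisation and asymptotic directions of quadrics\<close>

definition homog_vec :: "real \<Rightarrow> real^'n \<Rightarrow> real^('n option)" where
  "homog_vec a x = (\<chi> i. case i of None \<Rightarrow> a | Some j \<Rightarrow> x $ j)"

definition tail_vec :: "real^('n option) \<Rightarrow> real^'n" where
  "tail_vec v = (\<chi> j. v $ Some j)"

lemma homog_vec_nth [simp]: "homog_vec a x $ None = a" "homog_vec a x $ Some j = x $ j"
  by (simp_all add: homog_vec_def)

lemma tail_vec_nth [simp]: "tail_vec v $ j = v $ Some j"
  by (simp add: tail_vec_def)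

lemma homog_vec_tail_vec: "homog_vec (v $ None) (tail_vec v) = v"
  by (simp add: vec_eq_iff homog_vec_def split: option.split)

lemma scaleR_homog_vec: "c *\<^sub>R homog_vec a x = homog_vec (c * a) (c *\<^sub>R x)"
  by (simp add: vec_eq_iff homog_vec_def split: option.split)

lemma tendsto_homog_vec:
  assumes "(f \<longlongrightarrow> a) F" and "(g \<longlongrightarrow> x) F"
  shows "((\<lambda>k. homog_vec (f k) (g k)) \<longlongrightarrow> homog_vec a x) F"
proof (rule vec_tendstoI)
  fix i
  show "((\<lambda>k. homog_vec (f k) (g k) $ i) \<longlongrightarrow> homog_vec a x $ i) F"
    by (cases i) (simp_all add: assms tendsto_vec_nth)
qed

lemma sum_UNIV_option: "(\<Sum>i\<in>UNIV. f i) = f None + (\<Sum>j\<in>UNIV. f (Some j))"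
  for f :: "'n::finite option \<Rightarrow> 'a::comm_monoid_add"
  by (simp add: UNIV_option_conv sum.reindex)

definition quad_fun :: "real^'n \<Rightarrow> real^'n^'n \<Rightarrow> real^'n \<Rightarrow> real" where
  "quad_fun q Q x = q \<bullet> x + x \<bullet> (Q *v x)"

lemma quad_fun_add_scaleR:
  fixes Q :: "real^'n^'n"
  assumes "transpose Q = Q"
  shows "quad_fun q Q (x + s *\<^sub>R z) =
    quad_fun q Q x + s * (q \<bullet> z + 2 * (x \<bullet> (Q *v z))) + s\<^sup>2 * (z \<bullet> (Q *v z))"
proof -
  have "(x + s *\<^sub>R z) \<bullet> (Q *v (x + s *\<^sub>R z)) =
      x \<bullet> (Q *v x) + s * (x \<bullet> (Q *v z)) + s * (z \<bullet> (Q *v x)) + s * (s * (z \<bullet> (Q *v z)))"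
    by (simp add: matrix_vector_right_distrib matrix_vector_mult_scaleR inner_add_left inner_add_right
        distrib_left)
  then show ?thesis
    using symmetric_bilinear_commute[OF assms, of z x]
    by (simp add: quad_fun_def inner_add_right power2_eq_square distrib_left)
qed

lemma frob_homog_mat_outer:
  "frob (homog_mat c q Q) (outer v) =
    c * (v $ None)\<^sup>2 + v $ None * (q \<bullet> tail_vec v) + tail_vec v \<bullet> (Q *v tail_vec v)"
proof -
  have "frob (homog_mat c q Q) (outer v) =
     c * (v $ None)\<^sup>2 + (\<Sum>j\<in>UNIV. q $ j / 2 * (v $ None * v $ Some j)) +
     (\<Sum>i\<in>UNIV. q $ i / 2 * (v $ Some i * v $ None) + (\<Sum>j\<in>UNIV. Q $ i $ j * (v $ Some i * v $ Some j)))"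
    by (simp add: frob_def sum_UNIV_option homog_mat_def power2_eq_square)
  also have "\<dots> = c * (v $ None)\<^sup>2 + v $ None * (q \<bullet> tail_vec v) + tail_vec v \<bullet> (Q *v tail_vec v)"
    by (simp add: sum.distrib inner_vec_def matrix_vector_mult_def sum_distrib_left
        sum_divide_distrib[symmetric] algebra_simps)
  finally show ?thesis .
qed

lemma frob_homog_mat_outer_homog_vec:
  "frob (homog_mat 0 q Q) (outer (homog_vec a x)) = a * (q \<bullet> x) + x \<bullet> (Q *v x)"
  by (simp add: frob_homog_mat_outer vec_eq_iff tail_vec_def)

definition asymptotic_cone :: "'a::real_normed_vector set \<Rightarrow> 'a set" where
  "asymptotic_cone S = {d. \<exists>y t. (\<forall>\<^sub>F k in sequentially. y k \<in> S \<and> 0 < t k) \<and>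
      (t \<longlongrightarrow> 0) sequentially \<and> ((\<lambda>k. t k *\<^sub>R y k) \<longlongrightarrow> d) sequentially}"

lemma closed_convex_outer_homog_vec_recession:
  fixes S :: "(real^('n::finite option)^('n option)) set"
  assumes S: "closed S" "convex S" "(\<lambda>x. outer (homog_vec 1 x)) ` L \<subseteq> S"
    and d: "d \<in> asymptotic_cone L" and Z: "Z \<in> S"
  shows "Z + outer (homog_vec 0 d) \<in> S"
proof -
  obtain y t where ev: "\<forall>\<^sub>F k in sequentially. y k \<in> L \<and> 0 < t k"
    and t: "(t \<longlongrightarrow> 0) sequentially" and ty: "((\<lambda>k. t k *\<^sub>R y k) \<longlongrightarrow> d) sequentially"
    using d by (auto simp: asymptotic_cone_def)
  txt \<open>Z + [0; d][0; d]^T is the limit of (1 - t_k^2) Z + t_k^2 [1; y_k][1; y_k]^T.\<close>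
  define f where "f k = (1 - (t k)\<^sup>2) *\<^sub>R Z + outer (homog_vec (t k) (t k *\<^sub>R y k))" for k
  have f_eq: "f k = (1 - (t k)\<^sup>2) *\<^sub>R Z + (t k)\<^sup>2 *\<^sub>R outer (homog_vec 1 (y k))" for k
    using outer_scaleR[of "t k" "homog_vec 1 (y k)"] by (simp add: f_def scaleR_homog_vec)
  have "\<forall>\<^sub>F k in sequentially. \<bar>t k\<bar> < 1"
    using tendstoD[OF t, of 1] by (simp add: dist_real_def)
  with ev have "\<forall>\<^sub>F k in sequentially. f k \<in> S"
  proof eventually_elim
    case (elim k)
    then have "(t k)\<^sup>2 \<le> 1"
      by (simp add: abs_square_le_1)
    moreover have "outer (homog_vec 1 (y k)) \<in> S"
      using elim S(3) by blast
    ultimately show "f k \<in> S"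
      unfolding f_eq using S(2) Z by (simp add: convex_def)
  qed
  moreover have "(f \<longlongrightarrow> (1 - 0\<^sup>2) *\<^sub>R Z + outer (homog_vec 0 d)) sequentially"
    unfolding f_def by (intro tendsto_intros tendsto_outer tendsto_homog_vec t ty)
  ultimately show ?thesis
    using S(1) Lim_in_closed_set[of S f] by simp
qed

lemma asymptotic_coneI_linear:
  fixes d e :: "'a::real_normed_vector"
  assumes S: "\<forall>\<^sub>F k in sequentially. s k *\<^sub>R d + r k *\<^sub>R e \<in> S"
    and s: "filterlim s at_top sequentially" and r: "((\<lambda>k. r k / s k) \<longlongrightarrow> 0) sequentially"
  shows "d \<in> asymptotic_cone S"
proof -
  have pos: "\<forall>\<^sub>F k in sequentially. 0 < s k"
    using s by (simp add: filterlim_at_top_dense)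
  have "((\<lambda>k. 1 / s k) \<longlongrightarrow> 0) sequentially"
    using tendsto_inverse_0_at_top[OF s] by (simp add: inverse_eq_divide)
  moreover have "((\<lambda>k. (1 / s k) *\<^sub>R (s k *\<^sub>R d + r k *\<^sub>R e)) \<longlongrightarrow> d) sequentially"
  proof -
    have "((\<lambda>k. d + (r k / s k) *\<^sub>R e) \<longlongrightarrow> d + 0 *\<^sub>R e) sequentially"
      by (intro tendsto_intros r)
    moreover have "\<forall>\<^sub>F k in sequentially. d + (r k / s k) *\<^sub>R e = (1 / s k) *\<^sub>R (s k *\<^sub>R d + r k *\<^sub>R e)"
      using pos by eventually_elim (simp add: scaleR_add_right)
    ultimately show ?thesis
      by (simp add: Lim_transform_eventually)
  qed
  moreover have "\<forall>\<^sub>F k in sequentially. s k *\<^sub>R d + r k *\<^sub>R e \<in> S \<and> 0 < 1 / s k"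
    using S pos by eventually_elim simp
  ultimately show ?thesis
    unfolding asymptotic_cone_def
    by (intro CollectI exI[of _ "\<lambda>k. s k *\<^sub>R d + r k *\<^sub>R e"] exI[of _ "\<lambda>k. 1 / s k"] conjI)
qed

lemma asymptotic_cone_level_set_translation:
  fixes Q :: "real^'n^'n"
  assumes sym: "transpose Q = Q" and Qd: "Q *v d = 0" and qd: "q \<bullet> d = 0"
    and y0: "quad_fun q Q y0 = c"
  shows "d \<in> asymptotic_cone {x. quad_fun q Q x = c}"
proof (rule asymptotic_coneI_linear)
  show "\<forall>\<^sub>F k in sequentially. real k *\<^sub>R d + 1 *\<^sub>R y0 \<in> {x. quad_fun q Q x = c}"
    using quad_fun_add_scaleR[OF sym, of q y0 "real _" d] Qd qd y0 by (simp add: add.commute)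
  show "filterlim real at_top sequentially"
    by (rule filterlim_real_sequentially)
  show "((\<lambda>k. 1 / real k) \<longlongrightarrow> 0) sequentially"
    by (rule lim_1_over_n)
qed

lemma isotropic_partner:
  fixes Q :: "real^'n^'n"
  assumes sym: "transpose Q = Q" and dd: "d \<bullet> (Q *v d) = 0" and Qd: "Q *v d \<noteq> 0"
  obtains e where "e \<bullet> (Q *v e) = 0" and "d \<bullet> (Q *v e) \<noteq> 0"
proof -
  define v where "v = Q *v d"
  define \<beta> where "\<beta> = d \<bullet> (Q *v v)"
  have vd: "v \<bullet> (Q *v d) = \<beta>"
    using symmetric_bilinear_commute[OF sym, of v d] by (simp add: \<beta>_def)
  then have \<beta>: "\<beta> \<noteq> 0"
    using Qd by (auto simp: v_def)
  define e where "e = v + (- (v \<bullet> (Q *v v)) / (2 * \<beta>)) *\<^sub>R d"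
  have "d \<bullet> (Q *v e) = \<beta>"
    using dd by (simp add: e_def \<beta>_def matrix_vector_mult_diff_distrib matrix_vector_mult_scaleR
        inner_diff_right)
  moreover have "e \<bullet> (Q *v e) = 0"
    using quad_fun_add_scaleR[OF sym, of 0 v "- (v \<bullet> (Q *v v)) / (2 * \<beta>)" d] vd dd \<beta>
    by (simp add: quad_fun_def e_def field_simps)
  ultimately show ?thesis
    using that \<beta> by simp
qed

lemma asymptotic_cone_level_set_non_kernel:
  fixes Q :: "real^'n^'n"
  assumes sym: "transpose Q = Q" and dd: "d \<bullet> (Q *v d) = 0" and Qd: "Q *v d \<noteq> 0"
  shows "d \<in> asymptotic_cone {x. quad_fun q Q x = c}"
proof -
  obtain e where ee: "e \<bullet> (Q *v e) = 0" and \<beta>: "d \<bullet> (Q *v e) \<noteq> 0"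
    using isotropic_partner[OF sym dd Qd] by blast
  define \<beta> where "\<beta> = d \<bullet> (Q *v e)"
  define r where "r k = (c - real k * (q \<bullet> d)) / (2 * real k * \<beta> + q \<bullet> e)" for k :: nat
  have "((\<lambda>k. 2 * \<beta> + (q \<bullet> e) * (1 / real k)) \<longlongrightarrow> 2 * \<beta> + (q \<bullet> e) * 0) sequentially"
    by (intro tendsto_intros lim_1_over_n)
  moreover have "2 * \<beta> + (q \<bullet> e) * 0 \<noteq> 0"
    using \<beta> by (simp add: \<beta>_def)
  ultimately have "\<forall>\<^sub>F k in sequentially. 2 * \<beta> + (q \<bullet> e) * (1 / real k) \<noteq> 0"
    by (rule tendsto_imp_eventually_ne)
  then have ev: "\<forall>\<^sub>F k in sequentially. 0 < real k \<and> 2 * real k * \<beta> + q \<bullet> e \<noteq> 0"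
    using eventually_gt_at_top[of 0] by eventually_elim (auto simp: field_simps)
  show ?thesis
  proof (rule asymptotic_coneI_linear)
    show "\<forall>\<^sub>F k in sequentially. real k *\<^sub>R d + r k *\<^sub>R e \<in> {x. quad_fun q Q x = c}"
      using ev
    proof eventually_elim
      case (elim k)
      have "quad_fun q Q (real k *\<^sub>R d + r k *\<^sub>R e) = real k * (q \<bullet> d) + r k * (2 * real k * \<beta> + q \<bullet> e)"
        using dd ee symmetric_bilinear_commute[OF sym, of e d]
        by (simp add: quad_fun_add_scaleR[OF sym] \<beta>_def quad_fun_def matrix_vector_mult_scaleR
            algebra_simps power2_eq_square)
      also have "\<dots> = c"
        using elim by (simp add: r_def)
      finally show ?case
        by simp
    qed
    show "filterlim real at_top sequentially"
      by (rule filterlim_real_sequentially)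
    have "((\<lambda>k. (c * (1 / real k) - q \<bullet> d) * (1 / real k) / (2 * \<beta> + (q \<bullet> e) * (1 / real k)))
        \<longlongrightarrow> (c * 0 - q \<bullet> d) * 0 / (2 * \<beta> + (q \<bullet> e) * 0)) sequentially"
      using \<beta> by (intro tendsto_intros lim_1_over_n) (simp add: \<beta>_def)
    moreover have "\<forall>\<^sub>F k in sequentially.
        (c * (1 / real k) - q \<bullet> d) * (1 / real k) / (2 * \<beta> + (q \<bullet> e) * (1 / real k)) = r k / real k"
      using ev
    proof eventually_elim
      case (elim k)
      then have "c - real k * (q \<bullet> d) = (real k)\<^sup>2 * ((c * (1 / real k) - q \<bullet> d) * (1 / real k))"
        and "real k * (2 * real k * \<beta> + q \<bullet> e) = (real k)\<^sup>2 * (2 * \<beta> + (q \<bullet> e) * (1 / real k))"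
        by (simp_all add: field_simps power2_eq_square)
      then show ?case
        using elim by (simp add: r_def)
    qed
    ultimately show "((\<lambda>k. r k / real k) \<longlongrightarrow> 0) sequentially"
      by (simp add: Lim_transform_eventually)
  qed
qed

lemma asymptotic_cone_level_set_kernel_pos:
  fixes Q :: "real^'n^'n"
  assumes sym: "transpose Q = Q" and Qd: "Q *v d = 0" and \<kappa>: "0 < - (e \<bullet> (Q *v e)) / (q \<bullet> d)"
  shows "d \<in> asymptotic_cone {x. quad_fun q Q x = c}"
proof -
  define a where "a = e \<bullet> (Q *v e)"
  define \<delta> where "\<delta> = q \<bullet> d"
  have \<delta>: "\<delta> \<noteq> 0"
    using \<kappa> by (auto simp: \<delta>_def)
  have \<kappa>: "0 < - a / \<delta>"
    using \<kappa> by (simp add: a_def \<delta>_def)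
  define s where "s k = (c - real k * (q \<bullet> e) - (real k)\<^sup>2 * a) / \<delta>" for k :: nat
  define h where "h k = ((c * (1 / real k) - q \<bullet> e) * (1 / real k) - a) / \<delta>" for k :: nat
  have "(h \<longlongrightarrow> ((c * 0 - q \<bullet> e) * 0 - a) / \<delta>) sequentially"
    unfolding h_def using \<delta> by (intro tendsto_intros lim_1_over_n)
  then have h: "(h \<longlongrightarrow> - a / \<delta>) sequentially"
    by simp
  have s_h: "\<forall>\<^sub>F k in sequentially. h k * (real k)\<^sup>2 = s k"
    using eventually_gt_at_top[of 0]
    by eventually_elim (use \<delta> in \<open>simp add: s_def h_def field_simps power2_eq_square\<close>)
  show ?thesis
  proof (rule asymptotic_coneI_linear)
    show "\<forall>\<^sub>F k in sequentially. s k *\<^sub>R d + real k *\<^sub>R e \<in> {x. quad_fun q Q x = c}"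
    proof (rule always_eventually, rule allI)
      fix k
      have "quad_fun q Q (real k *\<^sub>R e + s k *\<^sub>R d) = quad_fun q Q (real k *\<^sub>R e) + s k * \<delta>"
        using Qd by (simp add: quad_fun_add_scaleR[OF sym] \<delta>_def)
      also have "quad_fun q Q (real k *\<^sub>R e) = real k * (q \<bullet> e) + (real k)\<^sup>2 * a"
        by (simp add: quad_fun_def a_def matrix_vector_mult_scaleR power2_eq_square)
      also have "real k * (q \<bullet> e) + (real k)\<^sup>2 * a + s k * \<delta> = c"
        using \<delta> by (simp add: s_def)
      finally show "s k *\<^sub>R d + real k *\<^sub>R e \<in> {x. quad_fun q Q x = c}"
        by (simp add: add.commute)
    qed
    have "filterlim (\<lambda>k. h k * (real k)\<^sup>2) at_top sequentially"
      by (intro filterlim_tendsto_pos_mult_at_top[OF h \<kappa>] filterlim_pow_at_top filterlim_real_sequentially)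
        simp
    then show "filterlim s at_top sequentially"
      using filterlim_cong[OF refl refl s_h] by simp
    have "((\<lambda>k. (1 / real k) / h k) \<longlongrightarrow> 0 / (- a / \<delta>)) sequentially"
      using \<kappa> by (intro tendsto_intros lim_1_over_n h) auto
    moreover have "\<forall>\<^sub>F k in sequentially. (1 / real k) / h k = real k / s k"
      using s_h eventually_gt_at_top[of 0] order_tendstoD(1)[OF h \<kappa>]
      by eventually_elim (auto simp: power2_eq_square field_simps)
    ultimately show "((\<lambda>k. real k / s k) \<longlongrightarrow> 0) sequentially"
      by (simp add: Lim_transform_eventually)
  qed
qed

lemma asymptotic_cone_level_set_kernel:
  fixes Q :: "real^'n^'n"
  assumes sym: "transpose Q = Q" and Q: "Q \<noteq> 0" and Qd: "Q *v d = 0" and qd: "q \<bullet> d \<noteq> 0"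
  shows "d \<in> asymptotic_cone {x. quad_fun q Q x = c} \<or> - d \<in> asymptotic_cone {x. quad_fun q Q x = c}"
proof -
  obtain e where "e \<bullet> (Q *v e) \<noteq> 0"
    using quad_form_eq_0_imp_eq_0[OF sym] Q by blast
  then have "0 < - (e \<bullet> (Q *v e)) / (q \<bullet> d) \<or> 0 < - (e \<bullet> (Q *v e)) / (q \<bullet> - d)"
    using qd by (auto simp: divide_less_0_iff zero_less_divide_iff)
  moreover have "Q *v - d = 0"
    using Qd matrix_vector_mult_scaleR[of Q "-1" d] by simp
  ultimately show ?thesis
    using asymptotic_cone_level_set_kernel_pos[OF sym] Qd by blast
qed

section \<open>Convex hull exactness\<close>

lemma frob_outer_prod_left: "frob (outer_prod u w) M = u \<bullet> (M *v w)"
  by (simp add: frob_def inner_vec_def matrix_vector_mult_def sum_distrib_left mult_ac)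

lemma frob_outer_axis: "frob (outer (axis k 1)) M = M $ k $ k"
  by (simp add: frob_outer_prod_left nth_eq_bilinear_axis)

lemma psd_outer_decomposition_balanced:
  fixes X A :: "real^'m^'m"
  assumes X: "psd X" and Xkk: "X $ k $ k = 1"
  obtains qs where "X = sum_list (map outer qs)"
    and "\<And>v. v \<in> set qs \<Longrightarrow> frob A (outer v) = frob A X * (v $ k)\<^sup>2"
proof -
  define G where "G = A - frob A X *\<^sub>R outer (axis k 1)"
  have frob_G: "frob G M = frob A M - frob A X * M $ k $ k" for M
    by (simp add: G_def frob_diff_left frob_scaleR_left frob_outer_axis)
  obtain ps where ps: "X = sum_list (map outer ps)"
    using psd_eq_sum_list_outer[OF X] by blast
  have "(\<Sum>v\<leftarrow>ps. frob G (outer v)) = frob G X"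
    by (simp add: ps frob_sum_list)
  also have "\<dots> = 0"
    using Xkk by (simp add: frob_G)
  finally obtain qs where "sum_list (map outer qs) = sum_list (map outer ps)"
    and "\<forall>v\<in>set qs. frob G (outer v) = 0"
    using sum_list_outer_frob_null_decomposition by blast
  then have "X = sum_list (map outer qs)" "\<And>v. v \<in> set qs \<Longrightarrow> frob A (outer v) = frob A X * (v $ k)\<^sup>2"
    using ps by (simp_all add: frob_G power2_eq_square)
  then show ?thesis
    by (rule that)
qed

lemma sum_list_scaleR_in_convex_hull:
  fixes z :: "'a \<Rightarrow> 'b::real_vector"
  assumes "(\<Sum>x\<leftarrow>xs. w x) = 1" and "\<And>x. x \<in> set xs \<Longrightarrow> 0 \<le> w x \<and> z x \<in> S"
  shows "(\<Sum>x\<leftarrow>xs. w x *\<^sub>R z x) \<in> convex hull S"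
proof -
  have "(\<Sum>x\<leftarrow>xs. w x *\<^sub>R z x) = (\<Sum>i<length xs. w (xs ! i) *\<^sub>R z (xs ! i))"
    by (simp add: sum_list_sum_nth atLeast0LessThan)
  also have "\<dots> \<in> convex hull S"
  proof (rule convex_sum)
    show "(\<Sum>i<length xs. w (xs ! i)) = 1"
      using assms(1) by (simp add: sum_list_sum_nth atLeast0LessThan)
  qed (use assms(2) in \<open>auto intro: hull_inc\<close>)
  finally show ?thesis .
qed

lemma sum_list_map_filter_partition:
  "sum_list (map f xs) = sum_list (map f (filter P xs)) + sum_list (map f (filter (\<lambda>x. \<not> P x) xs))"
  for f :: "'a \<Rightarrow> 'b::ab_group_add"
  by (induction xs) (simp_all add: algebra_simps)

lemma isotropic_direction_in_asymptotic_cone: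
  fixes Q :: "real^'n^'n"
  assumes sym: "transpose Q = Q" and Q: "Q \<noteq> 0" and dd: "d \<bullet> (Q *v d) = 0"
    and y0: "quad_fun q Q y0 = c"
  shows "d \<in> asymptotic_cone {x. quad_fun q Q x = c} \<or> - d \<in> asymptotic_cone {x. quad_fun q Q x = c}"
  using asymptotic_cone_level_set_non_kernel[OF sym dd] asymptotic_cone_level_set_translation[OF sym _ _ y0]
    asymptotic_cone_level_set_kernel[OF sym Q]
  by blast

lemma closure_convex_hull_level_set_add_isotropic:
  fixes Q :: "real^'n^'n" and q :: "real^'n" and c :: real
  defines "S \<equiv> closure (convex hull ((\<lambda>x. outer (homog_vec 1 x)) ` {x. quad_fun q Q x = c}))"
  assumes sym: "transpose Q = Q" and Q: "Q \<noteq> 0" and dd: "d \<bullet> (Q *v d) = 0"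
    and y0: "quad_fun q Q y0 = c" and Z: "Z \<in> S"
  shows "Z + outer (homog_vec 0 d) \<in> S"
proof -
  have S: "closed S" "convex S" "(\<lambda>x. outer (homog_vec 1 x)) ` {x. quad_fun q Q x = c} \<subseteq> S"
    unfolding S_def by (auto intro: convex_closure closure_subset[THEN subsetD] hull_inc)
  have "outer (homog_vec 0 (- d)) = outer (homog_vec 0 d)"
    using outer_scaleR[of "-1" "homog_vec 0 d"] scaleR_homog_vec[of "-1" 0 d] by simp
  then show ?thesis
    using isotropic_direction_in_asymptotic_cone[OF sym Q dd y0]
      closed_convex_outer_homog_vec_recession[OF S _ Z] by metis
qed

lemma balanced_outer_affine_point:
  assumes balanced: "frob (homog_mat 0 q Q) (outer v) = c * (v $ None)\<^sup>2" and v: "v $ None \<noteq> 0"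
  defines "x \<equiv> (1 / v $ None) *\<^sub>R tail_vec v"
  shows "outer v = (v $ None)\<^sup>2 *\<^sub>R outer (homog_vec 1 x)" and "quad_fun q Q x = c"
proof -
  have "homog_vec 1 x = (1 / v $ None) *\<^sub>R v"
    using v scaleR_homog_vec[of "1 / v $ None" "v $ None" "tail_vec v", unfolded homog_vec_tail_vec]
    by (simp add: x_def)
  then show outer_v: "outer v = (v $ None)\<^sup>2 *\<^sub>R outer (homog_vec 1 x)"
    using v by (simp add: outer_scaleR power_divide)
  have "(v $ None)\<^sup>2 * quad_fun q Q x = (v $ None)\<^sup>2 * c"
    using balanced
    by (subst (asm) outer_v) (simp add: frob_scaleR frob_homog_mat_outer_homog_vec quad_fun_def mult.commute)
  then show "quad_fun q Q x = c"
    using v by simp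
qed

lemma balanced_outer_point_at_infinity:
  assumes balanced: "frob (homog_mat 0 q Q) (outer v) = c * (v $ None)\<^sup>2" and v: "v $ None = 0"
  shows "outer v = outer (homog_vec 0 (tail_vec v))" and "tail_vec v \<bullet> (Q *v tail_vec v) = 0"
proof -
  show outer_v: "outer v = outer (homog_vec 0 (tail_vec v))"
    using homog_vec_tail_vec[of v] v by simp
  show "tail_vec v \<bullet> (Q *v tail_vec v) = 0"
    using balanced v by (simp add: outer_v frob_homog_mat_outer_homog_vec)
qed

lemma add_sum_list_mem:
  assumes "Z \<in> S" and "\<And>Z v. Z \<in> S \<Longrightarrow> v \<in> set xs \<Longrightarrow> Z + f v \<in> S"
  shows "Z + sum_list (map f xs) \<in> S"
  using assms
proof (induction xs arbitrary: Z)
  case (Cons v xs)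
  then have "Z + f v + sum_list (map f xs) \<in> S"
    by simp
  then show ?case
    by (simp add: add.assoc)
qed simp

lemma psd_in_closure_convex_hull_level_set:
  fixes q :: "real^'n" and Q :: "real^'n^'n"
  assumes sym: "transpose Q = Q" and Q: "Q \<noteq> 0" and X: "psd X" and X11: "X $ None $ None = 1"
  shows "X \<in> closure (convex hull ((\<lambda>x. outer (homog_vec 1 x)) `
      {x. quad_fun q Q x = frob (homog_mat 0 q Q) X}))" (is "X \<in> ?S")
proof -
  let ?c = "frob (homog_mat 0 q Q) X"
  let ?x = "\<lambda>v. (1 / v $ None) *\<^sub>R tail_vec v"
  obtain qs where X_qs: "X = sum_list (map outer qs)"
    and balanced: "\<And>v. v \<in> set qs \<Longrightarrow> frob (homog_mat 0 q Q) (outer v) = ?c * (v $ None)\<^sup>2"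
    using psd_outer_decomposition_balanced[OF X X11] by blast
  define T1 where "T1 = filter (\<lambda>v. v $ None \<noteq> 0) qs"
  define T2 where "T2 = filter (\<lambda>v. \<not> v $ None \<noteq> 0) qs"
  note T1 = balanced_outer_affine_point[OF balanced] and T2 = balanced_outer_point_at_infinity[OF balanced]
  have "1 = frob (outer (axis None 1)) X"
    using X11 by (simp add: frob_outer_axis)
  also have "\<dots> = (\<Sum>v\<leftarrow>T1. (v $ None)\<^sup>2) + (\<Sum>v\<leftarrow>T2. (v $ None)\<^sup>2)"
    unfolding X_qs frob_sum_list T1_def T2_def
    by (subst sum_list_map_filter_partition[where P = "\<lambda>v. v $ None \<noteq> 0"])
      (simp add: frob_outer_axis power2_eq_square)
  also have "(\<Sum>v\<leftarrow>T2. (v $ None)\<^sup>2) = 0"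
    unfolding T2_def by (induction qs) simp_all
  finally have weights: "(\<Sum>v\<leftarrow>T1. (v $ None)\<^sup>2) = 1"
    by simp
  then obtain v0 where "v0 \<in> set T1"
    by (cases T1) auto
  then have y0: "quad_fun q Q (?x v0) = ?c"
    using T1(2) by (simp add: T1_def)
  have "sum_list (map outer T1) = (\<Sum>v\<leftarrow>T1. (v $ None)\<^sup>2 *\<^sub>R outer (homog_vec 1 (?x v)))"
    using T1(1) by (intro arg_cong[where f = sum_list] map_cong) (simp_all add: T1_def)
  also have "\<dots> \<in> convex hull ((\<lambda>x. outer (homog_vec 1 x)) ` {x. quad_fun q Q x = ?c})"
    using weights T1(2) by (intro sum_list_scaleR_in_convex_hull) (auto simp: T1_def)
  finally have "sum_list (map outer T1) \<in> ?S"
    using closure_subset by blast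
  moreover have "Z + outer v \<in> ?S" if "Z \<in> ?S" "v \<in> set T2" for Z v
  proof -
    have "v \<in> set qs" "v $ None = 0"
      using that(2) by (auto simp: T2_def)
    then show ?thesis
      using closure_convex_hull_level_set_add_isotropic[OF sym Q T2(2) y0 that(1)] T2(1) by simp
  qed
  ultimately have "sum_list (map outer T1) + sum_list (map outer T2) \<in> ?S"
    by (rule add_sum_list_mem)
  moreover have "X = sum_list (map outer T1) + sum_list (map outer T2)"
    unfolding X_qs T1_def T2_def by (rule sum_list_map_filter_partition)
  ultimately show ?thesis
    by simp
qed

lemma C_rel_eq_Int:
  "C_rel q1 Q1 bl bu =
    {X. psd X} \<inter> {X. X $ None $ None = 1} \<inter> frob (homog_mat 0 q1 Q1) -` ereal -` {bl..bu}"
  by (auto simp: C_rel_def)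

lemma closed_C_rel: "closed (C_rel q1 Q1 bl bu)"
  for q1 :: "real^'n"
proof -
  have "closed (ereal -` {bl..bu})"
    by (intro closed_vimage closed_atLeastAtMost continuous_on_ereal continuous_on_id)
  moreover have "continuous_on UNIV (frob (homog_mat 0 q1 Q1))"
    by (rule linear_continuous_on) (simp add: linear_frob flip: linear_conv_bounded_linear)
  ultimately have "closed (frob (homog_mat 0 q1 Q1) -` ereal -` {bl..bu})"
    by (rule closed_vimage)
  moreover have "closed {X :: real^('n option)^('n option). X $ None $ None = 1}"
    by (intro closed_Collect_eq continuous_intros)
  ultimately show ?thesis
    unfolding C_rel_eq_Int
    by (intro closed_Int closed_psd)
qed

lemma convex_C_rel: "convex (C_rel q1 Q1 bl bu)"
  for q1 :: "real^'n"
proof -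
  have "is_interval (ereal -` {bl..bu})"
    unfolding is_interval_1 by (auto, (metis ereal_less_eq(3) order_trans)+)
  then have "convex (ereal -` {bl..bu})"
    by (rule is_interval_convex)
  moreover have "convex {X :: real^('n option)^('n option). X $ None $ None = 1}"
    by (auto simp: convex_def algebra_simps)
  ultimately show ?thesis
    unfolding C_rel_eq_Int by (intro convex_Int convex_psd convex_linear_vimage linear_frob)
qed

lemma C_set_subset_C_rel: "C_set q1 Q1 bl bu \<subseteq> C_rel q1 Q1 bl bu"
  by (auto simp: C_set_def C_rel_def)

lemma extreme_point_C_rel_in_C_set:
  assumes "X extreme_point_of C_rel q1 Q1 bl bu"
  shows "X \<in> C_set q1 Q1 bl bu"
  using assms extreme_point_C_rel_rank_le_1[OF assms]
  by (simp add: extreme_point_of_def C_rel_def C_set_def)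

lemma outer_homog_vec_level_set_subset_C_set:
  assumes "bl \<le> ereal c" and "ereal c \<le> bu"
  shows "(\<lambda>x. outer (homog_vec 1 x)) ` {x. quad_fun q1 Q1 x = c} \<subseteq> C_set q1 Q1 bl bu"
  using assms rank_outer_le_1
  by (auto simp: C_set_def psd_outer frob_homog_mat_outer_homog_vec quad_fun_def)

lemma C_rel_eq_closure_convex_hull_C_set:
  assumes "transpose Q1 = Q1" and "Q1 \<noteq> 0"
  shows "C_rel q1 Q1 bl bu = closure (convex hull (C_set q1 Q1 bl bu))"
proof
  show "C_rel q1 Q1 bl bu \<subseteq> closure (convex hull (C_set q1 Q1 bl bu))"
  proof
    fix X assume X: "X \<in> C_rel q1 Q1 bl bu"
    then have "X \<in> closure (convex hull ((\<lambda>x. outer (homog_vec 1 x)) `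
        {x. quad_fun q1 Q1 x = frob (homog_mat 0 q1 Q1) X}))"
      using psd_in_closure_convex_hull_level_set[OF assms] by (simp add: C_rel_def)
    also have "\<dots> \<subseteq> closure (convex hull (C_set q1 Q1 bl bu))"
      using X by (intro closure_mono hull_mono outer_homog_vec_level_set_subset_C_set)
        (simp_all add: C_rel_def)
    finally show "X \<in> closure (convex hull (C_set q1 Q1 bl bu))" .
  qed
  show "closure (convex hull (C_set q1 Q1 bl bu)) \<subseteq> C_rel q1 Q1 bl bu"
    by (intro closure_minimal hull_minimal C_set_subset_C_rel convex_C_rel closed_C_rel)
qed

theorem corollary6:
  fixes q1 :: "real^'n" and Q1 :: "real^'n^'n" and bl bu :: ereal
  assumes "transpose Q1 = Q1" and "bl \<le> bu"
  shows "(\<forall>X. X extreme_point_of C_rel q1 Q1 bl bu \<longrightarrow> X \<in> C_set q1 Q1 bl bu)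
       \<and> ((Q1 \<noteq> 0 \<and> bl \<noteq> -\<infinity> \<and> bu \<noteq> \<infinity>) \<longrightarrow>
            C_rel q1 Q1 bl bu = closure (convex hull (C_set q1 Q1 bl bu)))"
  using extreme_point_C_rel_in_C_set C_rel_eq_closure_convex_hull_C_set[OF assms(1)] by blast

end
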